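(* Let $a\ge2$ be an integer and $G=\langle x,y\mid x^a=y^a\rangle$, which is a Garside group with Garside element $\Delta=x^a=y^a$ (central). Then (i) $x$ and $y$ are not conjugate in $G$ (although $x^a=y^a$ and both are periodic); (ii) there is no Garside structure on $G$ in which $x$ is a Garside element.
   Context: A Garside structure on a group $G$ is a triple $(G,G^+,\Delta)$ where $G$ is the group of fractions of a Garside monoid $G^+$ (an atomic, left and right cancellative monoid that is a lattice under both the prefix order and the suffix order) and $\Delta\in G^+$ is an element whose left and right divisors in $G^+$ coincide, form a finite set, and generate $G^+$; $\Delta$ is then called a Garside element. An element $g$ is periodic with respect to $\Delta$ if $g=1$ or $g^k$ is conjugate to $\Delta^\ell$ for some nonzero integers $k,\ell$. *)

theory Defs
  imports "HOL-Algebra.Algebra"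
begin

text \<open>Letters of words in the free group on x, y: the first component selects
the generator (False = x, True = y), the second says whether the letter is
the inverse of that generator.\<close>

type_synonym letter = "bool \<times> bool"

definition inv_letter :: "letter \<Rightarrow> letter" where
  "inv_letter l = (fst l, \<not> snd l)"

inductive_set pres_rel :: "nat \<Rightarrow> (letter list \<times> letter list) set" for a :: nat where
  refl: "(w, w) \<in> pres_rel a"
| sym: "(u, v) \<in> pres_rel a \<Longrightarrow> (v, u) \<in> pres_rel a"
| trans: "(u, v) \<in> pres_rel a \<Longrightarrow> (v, w) \<in> pres_rel a \<Longrightarrow> (u, w) \<in> pres_rel a"
| ctx: "(u, v) \<in> pres_rel a \<Longrightarrow> (p @ u @ q, p @ v @ q) \<in> pres_rel a"
| cancel: "([l, inv_letter l], []) \<in> pres_rel a"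
| relator: "(replicate a (False, False), replicate a (True, False)) \<in> pres_rel a"

definition xy_group :: "nat \<Rightarrow> letter list set monoid" where
  "xy_group a = \<lparr> partial_object.carrier = UNIV // pres_rel a,
     monoid.mult = (\<lambda>A B. pres_rel a `` {(SOME u. u \<in> A) @ (SOME v. v \<in> B)}),
     monoid.one = pres_rel a `` {[]} \<rparr>"

definition gen_x :: "nat \<Rightarrow> letter list set" where
  "gen_x a = pres_rel a `` {[(False, False)]}"

definition gen_y :: "nat \<Rightarrow> letter list set" where
  "gen_y a = pres_rel a `` {[(True, False)]}"

definition left_divides :: "('a, 'b) monoid_scheme \<Rightarrow> 'a set \<Rightarrow> 'a \<Rightarrow> 'a \<Rightarrow> bool" where
  "left_divides G M u v \<longleftrightarrow> u \<in> M \<and> v \<in> M \<and> (\<exists>c\<in>M. u \<otimes>\<^bsub>G\<^esub> c = v)"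

definition right_divides :: "('a, 'b) monoid_scheme \<Rightarrow> 'a set \<Rightarrow> 'a \<Rightarrow> 'a \<Rightarrow> bool" where
  "right_divides G M u v \<longleftrightarrow> u \<in> M \<and> v \<in> M \<and> (\<exists>c\<in>M. c \<otimes>\<^bsub>G\<^esub> u = v)"

definition is_lattice_on :: "'a set \<Rightarrow> ('a \<Rightarrow> 'a \<Rightarrow> bool) \<Rightarrow> bool" where
  "is_lattice_on M rel \<longleftrightarrow>
     (\<forall>u\<in>M. rel u u) \<and>
     (\<forall>u\<in>M. \<forall>v\<in>M. \<forall>w\<in>M. rel u v \<and> rel v w \<longrightarrow> rel u w) \<and>
     (\<forall>u\<in>M. \<forall>v\<in>M. rel u v \<and> rel v u \<longrightarrow> u = v) \<and>
     (\<forall>u\<in>M. \<forall>v\<in>M.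
        (\<exists>j\<in>M. rel u j \<and> rel v j \<and> (\<forall>z\<in>M. rel u z \<and> rel v z \<longrightarrow> rel j z)) \<and>
        (\<exists>m\<in>M. rel m u \<and> rel m v \<and> (\<forall>z\<in>M. rel z u \<and> rel z v \<longrightarrow> rel z m)))"

definition atomic_monoid :: "('a, 'b) monoid_scheme \<Rightarrow> 'a set \<Rightarrow> bool" where
  "atomic_monoid G M \<longleftrightarrow>
     (\<forall>m\<in>M. \<exists>N::nat. \<forall>xs. set xs \<subseteq> M - {\<one>\<^bsub>G\<^esub>} \<and>
        foldr (\<otimes>\<^bsub>G\<^esub>) xs \<one>\<^bsub>G\<^esub> = m \<longrightarrow> length xs \<le> N)"

definition cancellative_monoid :: "('a, 'b) monoid_scheme \<Rightarrow> 'a set \<Rightarrow> bool" where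
  "cancellative_monoid G M \<longleftrightarrow>
     (\<forall>u\<in>M. \<forall>v\<in>M. \<forall>w\<in>M. u \<otimes>\<^bsub>G\<^esub> v = u \<otimes>\<^bsub>G\<^esub> w \<longrightarrow> v = w) \<and>
     (\<forall>u\<in>M. \<forall>v\<in>M. \<forall>w\<in>M. v \<otimes>\<^bsub>G\<^esub> u = w \<otimes>\<^bsub>G\<^esub> u \<longrightarrow> v = w)"

definition garside_monoid :: "('a, 'b) monoid_scheme \<Rightarrow> 'a set \<Rightarrow> bool" where
  "garside_monoid G M \<longleftrightarrow>
     M \<subseteq> carrier G \<and> \<one>\<^bsub>G\<^esub> \<in> M \<and>
     (\<forall>u\<in>M. \<forall>v\<in>M. u \<otimes>\<^bsub>G\<^esub> v \<in> M) \<and>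
     atomic_monoid G M \<and> cancellative_monoid G M \<and>
     is_lattice_on M (left_divides G M) \<and> is_lattice_on M (right_divides G M)"

definition garside_element :: "('a, 'b) monoid_scheme \<Rightarrow> 'a set \<Rightarrow> 'a \<Rightarrow> bool" where
  "garside_element G M D \<longleftrightarrow>
     D \<in> M \<and>
     {u. left_divides G M u D} = {u. right_divides G M u D} \<and>
     finite {u. left_divides G M u D} \<and>
     (\<forall>m\<in>M. \<exists>ds. set ds \<subseteq> {u. left_divides G M u D} \<and> foldr (\<otimes>\<^bsub>G\<^esub>) ds \<one>\<^bsub>G\<^esub> = m)"

text \<open>(G, M, D) is a Garside structure on G: M is a Garside submonoid of G
which generates G as a group (so that G is the group of fractions of M),
and D is a Garside element of M.\<close>

definition garside_structure :: "('a, 'b) monoid_scheme \<Rightarrow> 'a set \<Rightarrow> 'a \<Rightarrow> bool" where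
  "garside_structure G M D \<longleftrightarrow>
     garside_monoid G M \<and> generate G M = carrier G \<and> garside_element G M D"

end

theory Submission
  imports Defs
begin

(*
  (i) The x-exponent sum of a word, taken modulo a, is invariant under the
  defining relations, hence well defined on G.  It is 1 on x and on every
  conjugate of x, but 0 on y, so x and y are not conjugate.

  (ii) General fact: if (G, M, D) is a Garside structure in which some power
  D^n (n >= 1) is central, then every y with y^n = D^n is conjugate to D.
  The prefix order  g <= h  iff  g^-1 h : M  is a lattice order on all of G
  (meets in M transported along the central powers of D), and the map
  U g = y^-1 g D is monotone since conjugation by D preserves M.  U permutes
  the finite set Q = {y^i D^-i | i < n} cyclically, so the meet h of Q
  satisfies U h <= h; as U^n h = h, the descending orbit closes up and
  U h = h, i.e. y h = h D.  Since x^a is central in G and y^a = x^a, a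
  Garside structure with Garside element x would make x and y conjugate,
  contradicting (i).
*)

lemma pres_rel_equiv: "equiv UNIV (pres_rel a)"
proof (rule equivI)
  show "refl (pres_rel a)" by (simp add: refl_on_def pres_rel.refl)
  show "sym (pres_rel a)" by (blast intro: symI pres_rel.sym)
  show "trans (pres_rel a)" by (blast intro: transI pres_rel.trans)
qed simp

lemma pres_rel_append:
  assumes "(u, u') \<in> pres_rel a" and "(v, v') \<in> pres_rel a"
  shows "(u @ v, u' @ v') \<in> pres_rel a"
proof -
  have "([] @ u @ v, [] @ u' @ v) \<in> pres_rel a" by (rule pres_rel.ctx[OF assms(1)])
  moreover have "(u' @ v @ [], u' @ v' @ []) \<in> pres_rel a" by (rule pres_rel.ctx[OF assms(2)])
  ultimately show ?thesis by (auto intro: pres_rel.trans)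
qed

lemma class_eq_iff: "pres_rel a `` {u} = pres_rel a `` {v} \<longleftrightarrow> (u, v) \<in> pres_rel a"
  using eq_equiv_class_iff[OF pres_rel_equiv] by blast

lemma some_in_class: "(u, SOME w. w \<in> pres_rel a `` {u}) \<in> pres_rel a"
  using someI[of "\<lambda>w. w \<in> pres_rel a `` {u}" u] by (auto intro: pres_rel.refl)

lemma xy_mult:
  "pres_rel a `` {u} \<otimes>\<^bsub>xy_group a\<^esub> pres_rel a `` {v} = pres_rel a `` {u @ v}"
proof -
  have "((SOME w. w \<in> pres_rel a `` {u}) @ (SOME w. w \<in> pres_rel a `` {v}), u @ v) \<in> pres_rel a"
    by (rule pres_rel.sym, rule pres_rel_append[OF some_in_class some_in_class])
  then show ?thesis unfolding xy_group_def by (simp add: class_eq_iff)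
qed

lemma xy_one: "\<one>\<^bsub>xy_group a\<^esub> = pres_rel a `` {[]}"
  by (simp add: xy_group_def)

lemma xy_carrierE:
  assumes "A \<in> carrier (xy_group a)" obtains w where "A = pres_rel a `` {w}"
  using assms unfolding xy_group_def by (auto elim: quotientE)

lemma xy_carrierI: "pres_rel a `` {w} \<in> carrier (xy_group a)"
  unfolding xy_group_def by (auto intro: quotientI)

definition winv :: "letter list \<Rightarrow> letter list" where
  "winv w = rev (map inv_letter w)"

lemma winv_cancel: "(winv w @ w, []) \<in> pres_rel a"
proof (induction w)
  case Nil
  then show ?case by (simp add: winv_def pres_rel.refl)
next
  case (Cons l w)
  have "winv (l # w) @ l # w = winv w @ [inv_letter l, inv_letter (inv_letter l)] @ w"
    by (simp add: winv_def inv_letter_def)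
  moreover have "(winv w @ [inv_letter l, inv_letter (inv_letter l)] @ w, winv w @ [] @ w) \<in> pres_rel a"
    by (rule pres_rel.ctx, rule pres_rel.cancel)
  ultimately show ?case using Cons by (auto intro: pres_rel.trans)
qed

lemma xy_group: "group (xy_group a)"
proof (rule groupI)
  fix A B
  assume "A \<in> carrier (xy_group a)" "B \<in> carrier (xy_group a)"
  then show "A \<otimes>\<^bsub>xy_group a\<^esub> B \<in> carrier (xy_group a)"
    by (metis xy_carrierE xy_mult xy_carrierI)
next
  fix A B C
  assume "A \<in> carrier (xy_group a)" "B \<in> carrier (xy_group a)" "C \<in> carrier (xy_group a)"
  then show "A \<otimes>\<^bsub>xy_group a\<^esub> B \<otimes>\<^bsub>xy_group a\<^esub> C = A \<otimes>\<^bsub>xy_group a\<^esub> (B \<otimes>\<^bsub>xy_group a\<^esub> C)"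
    by (elim xy_carrierE) (simp add: xy_mult)
next
  fix A
  assume "A \<in> carrier (xy_group a)"
  then obtain u where u: "A = pres_rel a `` {u}" by (rule xy_carrierE)
  show "\<one>\<^bsub>xy_group a\<^esub> \<otimes>\<^bsub>xy_group a\<^esub> A = A" by (simp add: u xy_mult xy_one)
  show "\<exists>B\<in>carrier (xy_group a). B \<otimes>\<^bsub>xy_group a\<^esub> A = \<one>\<^bsub>xy_group a\<^esub>"
    by (rule bexI[of _ "pres_rel a `` {winv u}"])
       (simp_all add: u xy_mult xy_one xy_carrierI class_eq_iff winv_cancel)
qed (simp add: xy_one xy_carrierI)

lemma xy_inv: "inv\<^bsub>xy_group a\<^esub> (pres_rel a `` {w}) = pres_rel a `` {winv w}"
  by (rule group.inv_equality[OF xy_group])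
     (simp_all add: xy_mult xy_one xy_carrierI class_eq_iff winv_cancel)

lemma xy_pow: "pres_rel a `` {[l]} [^]\<^bsub>xy_group a\<^esub> (k::nat) = pres_rel a `` {replicate k l}"
  by (induction k) (simp_all add: xy_one xy_mult replicate_append_same)

lemma gen_power_commutes_letter:
  assumes "fst l = b"
  shows "(replicate (Suc k) (b, False) @ [l], l # replicate (Suc k) (b, False)) \<in> pres_rel a"
proof (cases "snd l")
  case False
  then have "l = (b, False)" using assms by (cases l) auto
  then show ?thesis by (metis replicate_append_same pres_rel.refl)
next
  case True
  then have l: "l = (b, True)" using assms by (cases l) auto
  have "(replicate k (b, False) @ [(b, False), inv_letter (b, False)] @ [], replicate k (b, False) @ [] @ [])
      \<in> pres_rel a"
    by (rule pres_rel.ctx, rule pres_rel.cancel)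
  then have left: "(replicate (Suc k) (b, False) @ [l], replicate k (b, False)) \<in> pres_rel a"
    by (simp add: l inv_letter_def replicate_append_same[symmetric])
  have "([] @ [l, inv_letter l] @ replicate k (b, False), [] @ [] @ replicate k (b, False)) \<in> pres_rel a"
    by (rule pres_rel.ctx, rule pres_rel.cancel)
  then have right: "(l # replicate (Suc k) (b, False), replicate k (b, False)) \<in> pres_rel a"
    by (simp add: l inv_letter_def)
  show ?thesis using pres_rel.trans[OF left pres_rel.sym[OF right]] .
qed

text \<open>Using the relator, x^a = y^a commutes with every letter, hence with every word.\<close>

lemma x_power_commutes_letter:
  assumes "a \<ge> 1"
  shows "(replicate a (False, False) @ [l], l # replicate a (False, False)) \<in> pres_rel a"
proof -
  obtain k where a: "a = Suc k" using assms by (cases a) auto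
  show ?thesis
  proof (cases "fst l")
    case False
    then show ?thesis using gen_power_commutes_letter[of l False k a] a by simp
  next
    case True
    have r: "(replicate a (False, False), replicate a (True, False)) \<in> pres_rel a"
      by (rule pres_rel.relator)
    have "(replicate a (False, False) @ [l], replicate a (True, False) @ [l]) \<in> pres_rel a"
      using pres_rel_append[OF r pres_rel.refl] .
    moreover have "(replicate a (True, False) @ [l], l # replicate a (True, False)) \<in> pres_rel a"
      using gen_power_commutes_letter[of l True k a] a True by simp
    moreover have "([l] @ replicate a (True, False), [l] @ replicate a (False, False)) \<in> pres_rel a"
      using pres_rel_append[OF pres_rel.refl pres_rel.sym[OF r]] .
    ultimately show ?thesis by (auto intro: pres_rel.trans)
  qed
qed

lemma x_power_central:
  assumes "a \<ge> 1" and "g \<in> carrier (xy_group a)"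
  shows "gen_x a [^]\<^bsub>xy_group a\<^esub> a \<otimes>\<^bsub>xy_group a\<^esub> g
       = g \<otimes>\<^bsub>xy_group a\<^esub> gen_x a [^]\<^bsub>xy_group a\<^esub> a"
proof -
  obtain w where w: "g = pres_rel a `` {w}" using assms(2) by (rule xy_carrierE)
  have "(replicate a (False, False) @ w, w @ replicate a (False, False)) \<in> pres_rel a"
  proof (induction w)
    case (Cons l w)
    have "(replicate a (False, False) @ [l] @ w, (l # replicate a (False, False)) @ w) \<in> pres_rel a"
      using pres_rel_append[OF x_power_commutes_letter[OF assms(1)] pres_rel.refl] by simp
    moreover have "([l] @ replicate a (False, False) @ w, [l] @ w @ replicate a (False, False)) \<in> pres_rel a"
      using pres_rel_append[OF pres_rel.refl Cons] .
    ultimately show ?case by (auto intro: pres_rel.trans)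
  qed (simp add: pres_rel.refl)
  then show ?thesis by (simp add: w gen_x_def xy_pow xy_mult class_eq_iff)
qed

lemma y_power_eq_x_power:
  "gen_y a [^]\<^bsub>xy_group a\<^esub> a = gen_x a [^]\<^bsub>xy_group a\<^esub> a"
  unfolding gen_x_def gen_y_def xy_pow class_eq_iff by (rule pres_rel.sym, rule pres_rel.relator)

section \<open>The x-exponent sum modulo a: x and y are not conjugate\<close>

definition x_exponent :: "letter \<Rightarrow> int" where
  "x_exponent l = (if fst l then 0 else if snd l then -1 else 1)"

definition x_exponent_sum :: "letter list \<Rightarrow> int" where
  "x_exponent_sum w = sum_list (map x_exponent w)"

lemma x_exponent_sum_Nil[simp]: "x_exponent_sum [] = 0"
  and x_exponent_sum_Cons[simp]: "x_exponent_sum (l # w) = x_exponent l + x_exponent_sum w"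
  by (simp_all add: x_exponent_sum_def)

lemma x_exponent_sum_append[simp]:
  "x_exponent_sum (u @ v) = x_exponent_sum u + x_exponent_sum v"
  by (simp add: x_exponent_sum_def)

lemma x_exponent_inv_letter[simp]: "x_exponent (inv_letter l) = - x_exponent l"
  by (simp add: x_exponent_def inv_letter_def)

lemma x_exponent_sum_winv[simp]: "x_exponent_sum (winv w) = - x_exponent_sum w"
  by (induction w) (simp_all add: winv_def)

lemma x_exponent_sum_mod_invariant:
  "(u, v) \<in> pres_rel a \<Longrightarrow> x_exponent_sum u mod int a = x_exponent_sum v mod int a"
proof (induction rule: pres_rel.induct)
  case (ctx u v p q)
  show ?case
    unfolding x_exponent_sum_append by (rule mod_add_cong[OF HOL.refl mod_add_cong[OF ctx.IH HOL.refl]])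
next
  case (cancel l)
  then show ?case by (simp add: x_exponent_sum_def x_exponent_def inv_letter_def)
next
  case relator
  then show ?case by (simp add: x_exponent_sum_def x_exponent_def sum_list_replicate)
qed auto

theorem x_not_conjugate_y:
  assumes "a \<ge> 2"
  shows "\<not> (\<exists>g \<in> carrier (xy_group a).
             g \<otimes>\<^bsub>xy_group a\<^esub> gen_x a \<otimes>\<^bsub>xy_group a\<^esub> inv\<^bsub>xy_group a\<^esub> g = gen_y a)"
proof
  assume "\<exists>g \<in> carrier (xy_group a).
            g \<otimes>\<^bsub>xy_group a\<^esub> gen_x a \<otimes>\<^bsub>xy_group a\<^esub> inv\<^bsub>xy_group a\<^esub> g = gen_y a"
  then obtain w where
    "pres_rel a `` {w} \<otimes>\<^bsub>xy_group a\<^esub> gen_x a \<otimes>\<^bsub>xy_group a\<^esub> inv\<^bsub>xy_group a\<^esub> (pres_rel a `` {w})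
       = gen_y a"
    by (auto elim: xy_carrierE)
  then have "(w @ [(False, False)] @ winv w, [(True, False)]) \<in> pres_rel a"
    by (simp add: gen_x_def gen_y_def xy_inv xy_mult class_eq_iff)
  then have "x_exponent_sum (w @ [(False, False)] @ winv w) mod int a
           = x_exponent_sum [(True, False)] mod int a"
    by (rule x_exponent_sum_mod_invariant)
  then have "1 mod int a = 0"
    by (simp add: x_exponent_def)
  moreover have "1 mod int a = 1"
    using assms by (intro mod_pos_pos_trivial) auto
  ultimately show False by linarith
qed

context group
begin

lemma inv_mult_cancel_left [simp]:
  "x \<in> carrier G \<Longrightarrow> y \<in> carrier G \<Longrightarrow> inv x \<otimes> (x \<otimes> y) = y"
  and mult_inv_cancel_left [simp]:
  "x \<in> carrier G \<Longrightarrow> y \<in> carrier G \<Longrightarrow> x \<otimes> (inv x \<otimes> y) = y"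
  by (simp_all add: m_assoc[symmetric])

text \<open>For the shift  U g = y^-1 g D,  the set  {y^i D^-i | i < n}  is mapped onto itself
  as soon as  y^n = D^n:  U sends  y^(i+1) D^-(i+1)  to  y^i D^-i  and  1  to  y^(n-1) D^-(n-1).\<close>

lemma shift_orbit_closed:
  fixes n :: nat
  assumes y: "y \<in> carrier G" and D: "D \<in> carrier G" and n: "1 \<le> n" and pw: "y [^] n = D [^] n"
  shows "(\<lambda>i. y [^] i \<otimes> inv (D [^] i)) ` {..<n}
         \<subseteq> (\<lambda>g. inv y \<otimes> g \<otimes> D) ` (\<lambda>i. y [^] i \<otimes> inv (D [^] i)) ` {..<n}"
proof
  fix q
  assume "q \<in> (\<lambda>i. y [^] i \<otimes> inv (D [^] i)) ` {..<n}"
  then obtain i where i: "i < n" and q: "q = y [^] i \<otimes> inv (D [^] i)" by blast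
  show "q \<in> (\<lambda>g. inv y \<otimes> g \<otimes> D) ` (\<lambda>i. y [^] i \<otimes> inv (D [^] i)) ` {..<n}"
  proof (cases "Suc i < n")
    case True
    have "q = inv y \<otimes> ((y \<otimes> y [^] i) \<otimes> inv (D \<otimes> D [^] i)) \<otimes> D"
      using y D by (simp add: q inv_mult_group m_assoc)
    then have "q = inv y \<otimes> (y [^] Suc i \<otimes> inv (D [^] Suc i)) \<otimes> D"
      using y D by (simp only: nat_pow_Suc2)
    then show ?thesis unfolding image_image using True by (intro rev_image_eqI[of "Suc i"]) simp_all
  next
    case False
    then have n_eq: "n = Suc i" using i by simp
    have "y \<otimes> y [^] i = D \<otimes> D [^] i"
      by (metis pw n_eq nat_pow_Suc2 y D)
    then have "y [^] i = inv y \<otimes> (D \<otimes> D [^] i)"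
      using y D by (simp add: inv_solve_left)
    then have "q = inv y \<otimes> (y [^] (0::nat) \<otimes> inv (D [^] (0::nat))) \<otimes> D"
      using y D by (simp add: q m_assoc)
    then show ?thesis unfolding image_image using n by (intro rev_image_eqI[of 0]) simp_all
  qed
qed

lemma shift_iterate:
  assumes "y \<in> carrier G" and "D \<in> carrier G" and "h \<in> carrier G"
  shows "((\<lambda>g. inv y \<otimes> g \<otimes> D) ^^ k) h = inv (y [^] k) \<otimes> h \<otimes> D [^] k"
  using assms by (induction k) (simp_all add: inv_mult_group m_assoc)

end

section \<open>Garside structures whose Garside element has a central power\<close>

text \<open>A Garside structure (G, M, D) in which the power D^n, n >= 1, is central.
  (In the theorem, D = x and n = a.)\<close>

locale garside_central_power = group G for G (structure) +
  fixes M :: "'a set" and D :: 'a and n :: nat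
  assumes garside: "garside_structure G M D"
    and n_pos: "1 \<le> n"
    and central: "\<And>g. g \<in> carrier G \<Longrightarrow> D [^] n \<otimes> g = g \<otimes> D [^] n"
begin

lemma M_carrier [simp]: "u \<in> M \<Longrightarrow> u \<in> carrier G"
  and one_M [simp]: "\<one> \<in> M"
  and mult_M [simp]: "u \<in> M \<Longrightarrow> v \<in> M \<Longrightarrow> u \<otimes> v \<in> M"
  and D_M [simp]: "D \<in> M"
  using garside unfolding garside_structure_def garside_monoid_def garside_element_def by blast+

lemma D_carrier [simp]: "D \<in> carrier G"
  by simp

abbreviation simple :: "'a \<Rightarrow> bool" where
  "simple d \<equiv> left_divides G M d D"

lemma simple_M: "simple d \<Longrightarrow> d \<in> M"
  unfolding left_divides_def by blast

lemma simple_iff_right_divisor: "simple d \<longleftrightarrow> right_divides G M d D"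
  using garside unfolding garside_structure_def garside_element_def by blast

lemma M_induct [consumes 1, case_names one simple]:
  assumes "m \<in> M" and "P \<one>"
    and step: "\<And>d m. simple d \<Longrightarrow> m \<in> M \<Longrightarrow> P m \<Longrightarrow> P (d \<otimes> m)"
  shows "P m"
proof -
  obtain ds where ds: "set ds \<subseteq> {d. simple d}" and m: "foldr (\<otimes>) ds \<one> = m"
    using garside assms(1) unfolding garside_structure_def garside_element_def by blast
  from ds have "foldr (\<otimes>) ds \<one> \<in> M \<and> P (foldr (\<otimes>) ds \<one>)"
    by (induction ds) (auto simp: simple_M \<open>P \<one>\<close> intro: step)
  then show ?thesis using m by simp
qed

text \<open>Atomicity excludes nontrivial invertible elements in M.\<close>

lemma M_no_units:
  assumes u: "u \<in> M" and v: "v \<in> M" and uv: "u \<otimes> v = \<one>"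
  shows "u = \<one>"
proof (rule ccontr)
  assume u1: "u \<noteq> \<one>"
  then have v1: "v \<noteq> \<one>" using uv u by auto
  obtain N where N: "\<forall>xs. set xs \<subseteq> M - {\<one>} \<and> foldr (\<otimes>) xs \<one> = \<one> \<longrightarrow> length xs \<le> N"
    using garside unfolding garside_structure_def garside_monoid_def atomic_monoid_def by blast
  have "foldr (\<otimes>) (concat (replicate k [u, v])) \<one> = \<one>" for k
    using u v uv by (induction k) (simp_all add: m_assoc[symmetric])
  moreover have "set (concat (replicate (Suc N) [u, v])) \<subseteq> M - {\<one>}"
    using u v u1 v1 by auto
  ultimately have "length (concat (replicate (Suc N) [u, v])) \<le> N"
    using N by blast
  then show False by (simp add: length_concat sum_list_replicate)
qed

lemma left_divides_iff:
  assumes "u \<in> M" and "v \<in> M"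
  shows "left_divides G M u v \<longleftrightarrow> inv u \<otimes> v \<in> M"
proof
  assume "left_divides G M u v"
  then obtain c where "c \<in> M" and "u \<otimes> c = v" unfolding left_divides_def by blast
  then show "inv u \<otimes> v \<in> M" using assms by (auto simp: m_assoc[symmetric])
next
  assume "inv u \<otimes> v \<in> M"
  moreover have "u \<otimes> (inv u \<otimes> v) = v" using assms by (simp add: m_assoc[symmetric])
  ultimately show "left_divides G M u v" unfolding left_divides_def using assms by blast
qed

text \<open>Conjugation by the Garside element preserves M (first on simple elements,
  using that left and right divisors of D coincide).\<close>

lemma conj_simple:
  assumes "simple d"
  shows "inv D \<otimes> d \<otimes> D \<in> M"
proof -
  obtain c where d: "d \<in> M" and c: "c \<in> M" and dc: "d \<otimes> c = D"
    using assms unfolding left_divides_def by blast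
  have "right_divides G M c D" unfolding right_divides_def using c d dc by auto
  then obtain e where e: "e \<in> M" and ce: "c \<otimes> e = D"
    using simple_iff_right_divisor unfolding left_divides_def by blast
  have "d \<otimes> D = D \<otimes> e" using dc ce d c e by (metis M_carrier m_assoc)
  then have "inv D \<otimes> d \<otimes> D = e" using d e by (simp add: m_assoc inv_solve_left)
  then show ?thesis using e by simp
qed

lemma conj_M:
  assumes "m \<in> M"
  shows "inv D \<otimes> m \<otimes> D \<in> M"
  using assms
proof (induction rule: M_induct)
  case (simple d m)
  have "inv D \<otimes> (d \<otimes> m) \<otimes> D = (inv D \<otimes> d \<otimes> D) \<otimes> (inv D \<otimes> m \<otimes> D)"
    using simple_M[OF simple.hyps(1)] simple.hyps(2) by (simp add: m_assoc)
  then show ?case using conj_simple[OF simple.hyps(1)] simple.IH by simp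
qed simp

lemma D_pow_M [simp]: "D [^] (i::nat) \<in> M"
  by (induction i) auto

definition Z :: "nat \<Rightarrow> 'a" where
  "Z k = (D [^] n) [^] k"

lemma Z_carrier [simp]: "Z k \<in> carrier G"
  and Z_M [simp]: "Z k \<in> M"
  and Z_0 [simp]: "Z 0 = \<one>"
  and Z_add: "Z (j + k) = Z j \<otimes> Z k"
  by (simp_all add: Z_def nat_pow_pow nat_pow_mult distrib_left)

lemma Z_central: "g \<in> carrier G \<Longrightarrow> Z k \<otimes> g = g \<otimes> Z k"
proof (induction k)
  case (Suc k)
  have Z_Suc: "Z (Suc k) = Z k \<otimes> D [^] n" using Z_add[of k 1] by (simp add: Z_def)
  have "Z (Suc k) \<otimes> g = Z k \<otimes> (D [^] n \<otimes> g)" using Suc.prems by (simp add: Z_Suc m_assoc)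
  also have "\<dots> = (Z k \<otimes> g) \<otimes> D [^] n" using Suc.prems by (simp add: central m_assoc)
  also have "\<dots> = g \<otimes> Z (Suc k)" using Suc by (simp add: Z_Suc m_assoc)
  finally show ?case .
qed simp

lemma Z_inv_simple:
  assumes "simple d"
  shows "Z 1 \<otimes> inv d \<in> M"
proof -
  obtain c where d: "d \<in> M" and c: "c \<in> M" and dc: "d \<otimes> c = D"
    using assms unfolding left_divides_def by blast
  obtain b where n: "n = Suc b" using n_pos by (cases n) auto
  have inv_d: "inv d = c \<otimes> inv D" using d c by (simp add: dc[symmetric] inv_mult_group)
  have Z1: "Z 1 = D \<otimes> D [^] b" unfolding Z_def using n nat_pow_Suc2[of D b] by simp
  have "Z 1 \<otimes> inv d = inv d \<otimes> Z 1" using d by (simp add: Z_central)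
  also have "\<dots> = c \<otimes> D [^] b" unfolding Z1 using c by (simp add: inv_d m_assoc)
  finally show ?thesis using c by simp
qed

lemma Z_inv_M:
  assumes "m \<in> M"
  shows "\<exists>k. Z k \<otimes> inv m \<in> M"
  using assms
proof (induction rule: M_induct)
  case one
  show ?case by (rule exI[of _ 0]) simp
next
  case (simple d m)
  obtain k where k: "Z k \<otimes> inv m \<in> M" using simple.IH by blast
  have d: "d \<in> M" using simple_M[OF simple.hyps(1)] .
  have "Z (k + 1) \<otimes> inv (d \<otimes> m) = Z k \<otimes> ((Z 1 \<otimes> inv m) \<otimes> inv d)"
    unfolding Z_add using d simple.hyps(2) by (simp add: inv_mult_group m_assoc)
  also have "\<dots> = Z k \<otimes> ((inv m \<otimes> Z 1) \<otimes> inv d)"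
    using simple.hyps(2) by (simp only: Z_central[of "inv m" 1] inv_closed M_carrier)
  also have "\<dots> = (Z k \<otimes> inv m) \<otimes> (Z 1 \<otimes> inv d)"
    using d simple.hyps(2) by (simp add: m_assoc)
  finally show ?case using k Z_inv_simple[OF simple.hyps(1)] by (metis mult_M)
qed

lemma Z_bound:
  assumes "g \<in> carrier G"
  shows "\<exists>k. Z k \<otimes> g \<in> M"
proof -
  have "g \<in> generate G M"
    using assms garside unfolding garside_structure_def by blast
  then have "g \<in> carrier G \<and> (\<exists>k. Z k \<otimes> g \<in> M)"
  proof (induction rule: generate.induct)
    case one
    then show ?case by (intro conjI exI[of _ 0]) simp_all
  next
    case (incl h)
    then show ?case by (intro conjI exI[of _ 0]) simp_all
  next
    case (inv h)
    then show ?case using Z_inv_M by simp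
  next
    case (eng h1 h2)
    then obtain k j where k: "Z k \<otimes> h1 \<in> M" and j: "Z j \<otimes> h2 \<in> M"
      and c: "h1 \<in> carrier G" "h2 \<in> carrier G" by blast
    have "Z (k + j) \<otimes> (h1 \<otimes> h2) = (Z k \<otimes> h1) \<otimes> (Z j \<otimes> h2)"
      using c Z_central[of h1 j] by (simp add: Z_add m_assoc[symmetric]) (simp add: m_assoc)
    then show ?case using k j c by (metis mult_M m_closed)
  qed
  then show ?thesis by blast
qed

definition prefix_le :: "'a \<Rightarrow> 'a \<Rightarrow> bool" where
  "prefix_le g h \<longleftrightarrow> g \<in> carrier G \<and> h \<in> carrier G \<and> inv g \<otimes> h \<in> M"

lemma prefix_le_refl: "g \<in> carrier G \<Longrightarrow> prefix_le g g"
  by (simp add: prefix_le_def)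

lemma prefix_le_trans:
  assumes "prefix_le g h" and "prefix_le h k"
  shows "prefix_le g k"
proof -
  have c: "g \<in> carrier G" "h \<in> carrier G" "k \<in> carrier G"
    using assms by (auto simp: prefix_le_def)
  have "(inv g \<otimes> h) \<otimes> (inv h \<otimes> k) = inv g \<otimes> k" using c by (simp add: m_assoc)
  then show ?thesis using assms c by (metis prefix_le_def mult_M)
qed

lemma prefix_le_antisym:
  assumes "prefix_le g h" and "prefix_le h g"
  shows "g = h"
proof -
  have c: "g \<in> carrier G" "h \<in> carrier G" using assms by (auto simp: prefix_le_def)
  have "(inv g \<otimes> h) \<otimes> (inv h \<otimes> g) = \<one>" using c by (simp add: m_assoc)
  then have "inv g \<otimes> h = \<one>"
    using assms M_no_units[of "inv g \<otimes> h" "inv h \<otimes> g"] by (simp add: prefix_le_def)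
  then have "g \<otimes> (inv g \<otimes> h) = g" using c by simp
  then show ?thesis using c by simp
qed

lemma prefix_le_inv_Z_bound: "g \<in> carrier G \<Longrightarrow> \<exists>k. prefix_le (inv (Z k)) g"
  using Z_bound by (simp add: prefix_le_def)

lemma prefix_le_inv_Z_mono:
  assumes "j \<le> k"
  shows "prefix_le (inv (Z k)) (inv (Z j))"
proof -
  have "Z k \<otimes> inv (Z j) = Z (k - j)"
    using assms Z_add[of "k - j" j] by (simp add: m_assoc)
  then show ?thesis by (simp add: prefix_le_def)
qed

lemma M_meet:
  assumes "u \<in> M" and "v \<in> M"
  shows "\<exists>m\<in>M. left_divides G M m u \<and> left_divides G M m v \<and>
           (\<forall>z\<in>M. left_divides G M z u \<and> left_divides G M z v \<longrightarrow> left_divides G M z m)"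
proof -
  have "is_lattice_on M (left_divides G M)"
    using garside unfolding garside_structure_def garside_monoid_def by blast
  note joins_and_meets = this[unfolded is_lattice_on_def, THEN conjunct2, THEN conjunct2, THEN conjunct2]
  show ?thesis using bspec[OF bspec[OF joins_and_meets assms(1)] assms(2)] by (rule conjunct2)
qed

text \<open>Above a fixed element b the prefix order is a translate of left divisibility
  in M, so any two elements above b have a meet among the elements above b.\<close>

lemma cone_meet:
  assumes "prefix_le b g1" and "prefix_le b g2"
  shows "\<exists>m. prefix_le b m \<and> prefix_le m g1 \<and> prefix_le m g2 \<and>
             (\<forall>p. prefix_le b p \<and> prefix_le p g1 \<and> prefix_le p g2 \<longrightarrow> prefix_le p m)"
proof -
  have c: "b \<in> carrier G" "g1 \<in> carrier G" "g2 \<in> carrier G"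
    and u: "inv b \<otimes> g1 \<in> M" "inv b \<otimes> g2 \<in> M"
    using assms by (auto simp: prefix_le_def)
  obtain mm where mm: "mm \<in> M" "left_divides G M mm (inv b \<otimes> g1)" "left_divides G M mm (inv b \<otimes> g2)"
    and greatest: "\<forall>z\<in>M. left_divides G M z (inv b \<otimes> g1) \<and>
                        left_divides G M z (inv b \<otimes> g2) \<longrightarrow> left_divides G M z mm"
    using M_meet[OF u] by blast
  have inv_bm: "inv (b \<otimes> mm) = inv mm \<otimes> inv b" using c mm by (simp add: inv_mult_group)
  have "prefix_le b (b \<otimes> mm)" using c mm by (simp add: prefix_le_def)
  moreover have "prefix_le (b \<otimes> mm) g1" "prefix_le (b \<otimes> mm) g2"
    using c mm u left_divides_iff by (auto simp: prefix_le_def inv_bm m_assoc)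
  moreover have "prefix_le p (b \<otimes> mm)"
    if p: "prefix_le b p" "prefix_le p g1" "prefix_le p g2" for p
  proof -
    have pc: "p \<in> carrier G" and pM: "inv b \<otimes> p \<in> M" using p by (auto simp: prefix_le_def)
    have inv_bp: "inv (inv b \<otimes> p) = inv p \<otimes> b" using c pc by (simp add: inv_mult_group)
    have "left_divides G M (inv b \<otimes> p) (inv b \<otimes> g_i)"
      if "inv p \<otimes> g_i \<in> M" "g_i \<in> carrier G" "inv b \<otimes> g_i \<in> M" for g_i
      using that pM c pc by (simp add: left_divides_iff inv_bp m_assoc)
    then have "left_divides G M (inv b \<otimes> p) mm"
      using greatest pM p c u by (auto simp: prefix_le_def)
    then show ?thesis
      using pM mm c pc by (simp add: left_divides_iff inv_bp prefix_le_def m_assoc)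
  qed
  ultimately show ?thesis by blast
qed

definition is_glb :: "'a \<Rightarrow> 'a set \<Rightarrow> bool" where
  "is_glb h S \<longleftrightarrow> (\<forall>q\<in>S. prefix_le h q) \<and> (\<forall>p. (\<forall>q\<in>S. prefix_le p q) \<longrightarrow> prefix_le p h)"

text \<open>Any two elements of G have a meet: compute it above a common lower bound
  Z K^-1, and compare with an arbitrary lower bound p by descending further to
  a bound below both p and Z K^-1.\<close>

lemma glb_pair:
  assumes g1: "g1 \<in> carrier G" and g2: "g2 \<in> carrier G"
  shows "\<exists>m. is_glb m {g1, g2}"
proof -
  have below: "prefix_le (inv (Z k)) g" if "prefix_le (inv (Z j)) g" "j \<le> k" for g j k
    using prefix_le_trans[OF prefix_le_inv_Z_mono that(1)] that(2) by blast
  obtain k1 k2 where "prefix_le (inv (Z k1)) g1" "prefix_le (inv (Z k2)) g2"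
    using prefix_le_inv_Z_bound g1 g2 by blast
  then have b1: "prefix_le (inv (Z (max k1 k2))) g1" and b2: "prefix_le (inv (Z (max k1 k2))) g2"
    using below by auto
  define b where "b = inv (Z (max k1 k2))"
  obtain m where m: "prefix_le b m" "prefix_le m g1" "prefix_le m g2"
    and m_max: "\<And>p. prefix_le b p \<Longrightarrow> prefix_le p g1 \<Longrightarrow> prefix_le p g2 \<Longrightarrow> prefix_le p m"
    using cone_meet[OF b1 b2] unfolding b_def by blast
  have "prefix_le p m" if p: "prefix_le p g1" "prefix_le p g2" for p
  proof -
    obtain j where "prefix_le (inv (Z j)) p"
      using prefix_le_inv_Z_bound p by (auto simp: prefix_le_def)
    define b' where "b' = inv (Z (max j (max k1 k2)))"
    have b'_p: "prefix_le b' p" unfolding b'_def using below \<open>prefix_le (inv (Z j)) p\<close> by simp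
    have b'_b: "prefix_le b' b" unfolding b'_def b_def by (rule prefix_le_inv_Z_mono) simp
    have b_g: "prefix_le b g1" "prefix_le b g2" using b1 b2 by (simp_all add: b_def)
    obtain m' where m': "prefix_le b' m'" "prefix_le m' g1" "prefix_le m' g2"
      and m'_max: "\<And>q. prefix_le b' q \<Longrightarrow> prefix_le q g1 \<Longrightarrow> prefix_le q g2 \<Longrightarrow> prefix_le q m'"
      using cone_meet[OF prefix_le_trans[OF b'_b b_g(1)] prefix_le_trans[OF b'_b b_g(2)]] by blast
    have "prefix_le b m'" using m'_max[OF b'_b b_g] .
    then have "prefix_le m' m" using m_max m' by blast
    moreover have "prefix_le p m'" using m'_max[OF b'_p p] .
    ultimately show ?thesis using prefix_le_trans by blast
  qed
  then show ?thesis using m by (auto simp: is_glb_def)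
qed

lemma glb_finite:
  assumes "finite S" and "S \<noteq> {}" and "S \<subseteq> carrier G"
  shows "\<exists>h. is_glb h S"
  using assms
proof (induction S rule: finite_ne_induct)
  case (singleton q)
  then have "is_glb q {q}" by (simp add: is_glb_def prefix_le_refl)
  then show ?case ..
next
  case (insert q S)
  then obtain h where h: "is_glb h S" by blast
  have "h \<in> carrier G"
    using h \<open>S \<noteq> {}\<close> by (auto simp: is_glb_def prefix_le_def)
  then obtain m where "is_glb m {q, h}"
    using glb_pair insert.prems by blast
  then have "is_glb m (insert q S)"
    using h by (auto simp: is_glb_def intro: prefix_le_trans)
  then show ?case ..
qed

lemma glb_image_below:
  assumes h: "is_glb h S" and cover: "S \<subseteq> f ` S"
    and mono: "\<And>g g'. prefix_le g g' \<Longrightarrow> prefix_le (f g) (f g')"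
  shows "prefix_le (f h) h"
proof -
  have "prefix_le (f h) q" if "q \<in> S" for q
  proof -
    obtain q' where "q' \<in> S" and "q = f q'" using cover \<open>q \<in> S\<close> by blast
    then show ?thesis using h mono by (auto simp: is_glb_def)
  qed
  then show ?thesis using h by (simp add: is_glb_def)
qed

lemma periodic_point_fixed:
  assumes mono: "\<And>g g'. prefix_le g g' \<Longrightarrow> prefix_le (f g) (f g')"
    and down: "prefix_le (f h) h" and period: "(f ^^ Suc k) h = h"
  shows "f h = h"
proof -
  have step: "prefix_le ((f ^^ Suc j) h) ((f ^^ j) h)" for j
    by (induction j) (simp_all add: down mono)
  have below: "prefix_le ((f ^^ Suc j) h) (f h)" for j
  proof (induction j)
    case 0
    then show ?case using down by (simp add: prefix_le_def prefix_le_refl)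
  next
    case (Suc j)
    then show ?case using step[of "Suc j"] prefix_le_trans by blast
  qed
  show ?thesis using below[of k] period down prefix_le_antisym by simp
qed

text \<open>The main result on Garside structures: every n-th root of D^n is conjugate to D.
  The meet h of  {y^i D^-i | i < n}  is a fixed point of  U g = y^-1 g D.\<close>

theorem root_conjugate:
  assumes y: "y \<in> carrier G" and pw: "y [^] n = D [^] n"
  shows "\<exists>h\<in>carrier G. h \<otimes> D \<otimes> inv h = y"
proof -
  define U where "U = (\<lambda>g. inv y \<otimes> g \<otimes> D)"
  define Q where "Q = (\<lambda>i. y [^] i \<otimes> inv (D [^] i)) ` {..<n}"
  have "finite Q" "Q \<noteq> {}" "Q \<subseteq> carrier G"
    using n_pos y by (auto simp: Q_def lessThan_empty_iff)
  then obtain h where h: "is_glb h Q" using glb_finite by blast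
  have hc: "h \<in> carrier G"
    using h \<open>Q \<noteq> {}\<close> by (auto simp: is_glb_def prefix_le_def)
  have mono: "prefix_le (U g) (U g')" if "prefix_le g g'" for g g'
  proof -
    have c: "g \<in> carrier G" "g' \<in> carrier G" and gg': "inv g \<otimes> g' \<in> M"
      using that by (auto simp: prefix_le_def)
    have "inv (U g) \<otimes> U g' = inv D \<otimes> (inv g \<otimes> g') \<otimes> D"
      using c y by (simp add: U_def inv_mult_group m_assoc)
    then show ?thesis using conj_M[OF gg'] c y by (simp add: prefix_le_def U_def)
  qed
  have "Q \<subseteq> U ` Q"
    using shift_orbit_closed[OF y D_carrier n_pos pw] by (simp only: Q_def U_def)
  then have "prefix_le (U h) h"
    by (rule glb_image_below[where f = U, OF h _ mono])
  moreover have "(U ^^ Suc (n - 1)) h = h"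
  proof -
    have "(U ^^ n) h = inv (D [^] n) \<otimes> (h \<otimes> D [^] n)"
      unfolding U_def using shift_iterate[OF y D_carrier hc] hc by (simp add: pw m_assoc)
    also have "\<dots> = h" using hc by (simp add: central[OF hc, symmetric])
    finally show ?thesis using n_pos by simp
  qed
  ultimately have "U h = h" using periodic_point_fixed[where f = U, OF mono] by blast
  then have "y \<otimes> (inv y \<otimes> h \<otimes> D) = y \<otimes> h" by (simp add: U_def)
  then have "h \<otimes> D \<otimes> inv h = y"
    using y hc by (simp add: m_assoc)
  then show ?thesis using hc by blast
qed

end

text \<open>A Garside structure with Garside element x would, by the root-conjugacy theorem
  applied to the central power x^a = y^a, make x and y conjugate.\<close>

theorem mainTheorem7:
  fixes a :: nat
  assumes "a \<ge> 2"
  shows "(\<not> (\<exists>g \<in> carrier (xy_group a).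
             g \<otimes>\<^bsub>xy_group a\<^esub> gen_x a \<otimes>\<^bsub>xy_group a\<^esub> inv\<^bsub>xy_group a\<^esub> g = gen_y a))
       \<and> (\<not> (\<exists>M. garside_structure (xy_group a) M (gen_x a)))"
proof
  show not_conj: "\<not> (\<exists>g \<in> carrier (xy_group a).
             g \<otimes>\<^bsub>xy_group a\<^esub> gen_x a \<otimes>\<^bsub>xy_group a\<^esub> inv\<^bsub>xy_group a\<^esub> g = gen_y a)"
    using x_not_conjugate_y[OF assms] .
  show "\<not> (\<exists>M. garside_structure (xy_group a) M (gen_x a))"
  proof
    assume "\<exists>M. garside_structure (xy_group a) M (gen_x a)"
    then obtain M where "garside_structure (xy_group a) M (gen_x a)" by blast
    then have "garside_central_power (xy_group a) M (gen_x a) a"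
    proof (intro garside_central_power.intro[OF xy_group] garside_central_power_axioms.intro)
      fix g
      assume "g \<in> carrier (xy_group a)"
      then show "gen_x a [^]\<^bsub>xy_group a\<^esub> a \<otimes>\<^bsub>xy_group a\<^esub> g
               = g \<otimes>\<^bsub>xy_group a\<^esub> gen_x a [^]\<^bsub>xy_group a\<^esub> a"
        using assms by (intro x_power_central) simp_all
    qed (use assms in simp_all)
    moreover have "gen_y a \<in> carrier (xy_group a)"
      unfolding gen_y_def by (rule xy_carrierI)
    ultimately have "\<exists>h\<in>carrier (xy_group a).
        h \<otimes>\<^bsub>xy_group a\<^esub> gen_x a \<otimes>\<^bsub>xy_group a\<^esub> inv\<^bsub>xy_group a\<^esub> h = gen_y a"
      using y_power_eq_x_power by (rule garside_central_power.root_conjugate)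
    then show False using not_conj by blast
  qed
qed

end
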